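(* Let $n\ge 2$, let $M=(\mathbf{R}^3)^n\setminus\{(p_0,\ldots,p_0)\mid p_0\in\mathbf{R}^3\}$, and let $X$ be a vector field on $M$ (with $T_pM$ identified with $(\mathbf{R}^3)^n$) whose components $X_1,\ldots,X_n\colon M\to\mathbf{R}^3$ are homogeneous quadratic polynomials in the coordinates of $p=(p_1,\ldots,p_n)$, and which is translation invariant, i.e. $X_{p+(p_0,\ldots,p_0)}=X_p$ for all $p_0\in\mathbf{R}^3$. Define $\Psi(v)=v/\sqrt{\|v\|}$ for $v\neq 0$ and $\Psi(0)=0$. Then $Y=\Psi(X)$ descends to a vector field on the quotient $N=M/\sim$: for all $p,p'\in M$ with $p\sim p'$ one has $D(\pi)_p(\Psi(X_p))=D(\pi)_{p'}(\Psi(X_{p'}))$, so that $Y_q=D(\pi)(\Psi(X_p))$ with $\pi(p)=q$ is a well-defined vector field on $N$.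
   Context: The equivalence relation $\sim$ on $M$ is generated by $p\sim\lambda p$ for $\lambda>0$ and $p\sim p+(p_0,\ldots,p_0)$ for $p_0\in\mathbf{R}^3$. The maps are $\tau\colon(\mathbf{R}^3)^n\to(\mathbf{R}^3)^n$, $\tau(p_1,\ldots,p_n)=(p_1-p_n,\ldots,p_{n-1}-p_n,0)$, $\sigma(p)=p/\|p\|$ on $(\mathbf{R}^3)^n\setminus\{0\}$, and $\pi=\sigma\circ\tau\colon M\to S^{3(n-1)-1}$, where $S^{3(n-1)-1}=\{p\in(\mathbf{R}^3)^n: p_n=0,\ \|p\|=1\}$; $N$ is identified with this sphere via $\pi$, with the round metric. $D(\pi)$ denotes the differential of $\pi$. *)

theory Defs
  imports "HOL-Analysis.Analysis"
begin

text \<open>Configurations of n points in R^3 are elements of real^3^'n, where the finite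
  linearly ordered index type 'n plays the role of {1..n}; its greatest element is
  the last index n.\<close>

type_synonym ('n) config = "real^3^'n"

definition last_idx :: "'n::{finite,linorder}" where
  "last_idx = Max (UNIV :: 'n set)"

definition diag :: "real^3 \<Rightarrow> real^3^'n::{finite,linorder}" where
  "diag p0 = (\<chi> i. p0)"

definition Mset :: "(real^3^'n::{finite,linorder}) set" where
  "Mset = UNIV - range diag"

definition sim_gen :: "real^3^('n::{finite,linorder}) \<Rightarrow> real^3^('n::{finite,linorder}) \<Rightarrow> bool" where
  "sim_gen p q \<longleftrightarrow> p \<in> Mset \<and> q \<in> Mset \<and>
     ((\<exists>c>0. q = c *\<^sub>R p) \<or> (\<exists>p0. q = p + diag p0))"

definition sim :: "real^3^('n::{finite,linorder}) \<Rightarrow> real^3^('n::{finite,linorder}) \<Rightarrow> bool" where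
  "sim = equivclp sim_gen"

definition tau :: "real^3^'n::{finite,linorder} \<Rightarrow> real^3^'n::{finite,linorder}" where
  "tau p = (\<chi> i. p $ i - p $ last_idx)"

definition sigma :: "real^3^'n::{finite,linorder} \<Rightarrow> real^3^'n::{finite,linorder}" where
  "sigma p = p /\<^sub>R norm p"

definition proj :: "real^3^'n::{finite,linorder} \<Rightarrow> real^3^'n::{finite,linorder}" where
  "proj = sigma \<circ> tau"

definition Psi :: "real^3^'n::{finite,linorder} \<Rightarrow> real^3^'n::{finite,linorder}" where
  "Psi v = (if v = 0 then 0 else v /\<^sub>R sqrt (norm v))"

definition homog_quadratic_field :: "(real^3^('n::{finite,linorder}) \<Rightarrow> real^3^('n::{finite,linorder})) \<Rightarrow> bool" where
  "homog_quadratic_field X \<longleftrightarrow>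
     (\<exists>C :: 'n \<Rightarrow> 3 \<Rightarrow> 'n \<Rightarrow> 3 \<Rightarrow> 'n \<Rightarrow> 3 \<Rightarrow> real.
        \<forall>p\<in>Mset. X p = (\<chi> i a. \<Sum>j\<in>UNIV. \<Sum>b\<in>UNIV. \<Sum>k\<in>UNIV. \<Sum>c\<in>UNIV.
                                   C i a j b k c * (p $ j $ b) * (p $ k $ c)))"

end

theory Submission
  imports Defs
begin

text \<open>Both generators of \<open>\<sim>\<close> are diffeomorphisms \<open>g\<close> of \<open>M\<close> with \<open>proj \<circ> g = proj\<close>,
  so the chain rule gives \<open>D(\<pi>)\<^sub>p = D(\<pi>)\<^sub>g\<^sub>p \<circ> Dg\<close>. A translation has derivative the
  identity and leaves \<open>X\<close> unchanged; a scaling by \<open>c > 0\<close> has derivative \<open>c\<close>, multiplies the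
  quadratic field \<open>X\<close> by \<open>c\<^sup>2\<close>, hence \<open>\<Psi>(X)\<close> by \<open>c\<close>.\<close>

lemma equivclp_invariant:
  assumes "\<And>x y. r x y \<Longrightarrow> f x = f y" and "equivclp r x y"
  shows "f x = f y"
  using assms(2) unfolding equivclp_def
  by (induct rule: rtranclp_induct) (auto simp: symclp_def dest: assms(1))

lemma frechet_derivative_invariant:
  assumes "(g has_derivative g') (at x)" and "f differentiable (at (g x))" and "f \<circ> g = f"
  shows "frechet_derivative f (at x) = frechet_derivative f (at (g x)) \<circ> g'"
proof -
  have "g differentiable (at x)"
    using assms(1) by (auto simp: differentiable_def)
  from frechet_derivative_compose[OF this assms(2)] show ?thesis
    unfolding assms(3) frechet_derivative_at[OF assms(1), symmetric] .
qed

lemma tau_add_diag [simp]: "tau (x + diag p0) = tau x"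
  unfolding tau_def diag_def by (simp add: vec_eq_iff)

lemma tau_scaleR [simp]: "tau (c *\<^sub>R x) = c *\<^sub>R tau x"
  unfolding tau_def by (simp add: vec_eq_iff algebra_simps)

lemma bounded_linear_tau: "bounded_linear tau"
proof -
  have "linear tau"
    by (rule linearI) (simp_all add: tau_def vec_eq_iff algebra_simps)
  then show ?thesis by (simp add: linear_conv_bounded_linear)
qed

lemma Mset_iff_tau_nonzero: "p \<in> Mset \<longleftrightarrow> tau p \<noteq> 0"
proof
  assume "tau p \<noteq> 0"
  then show "p \<in> Mset" unfolding Mset_def tau_def diag_def by (auto simp: vec_eq_iff)
next
  assume "p \<in> Mset"
  moreover have "tau p = 0 \<Longrightarrow> p = diag (p $ last_idx)"
    unfolding tau_def diag_def by (simp add: vec_eq_iff)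
  ultimately show "tau p \<noteq> 0" unfolding Mset_def by auto
qed

lemma proj_scaleR: "c > 0 \<Longrightarrow> proj (c *\<^sub>R x) = proj x"
  unfolding proj_def sigma_def by simp

lemma proj_add_diag: "proj (x + diag p0) = proj x"
  unfolding proj_def by simp

lemma proj_differentiable:
  fixes p :: "real^3^'n::{finite,linorder}"
  assumes "p \<in> Mset"
  shows "proj differentiable (at p)"
proof -
  have sigma_eq: "sigma = (\<lambda>x::real^3^'n::{finite,linorder}. inverse (norm x) *\<^sub>R x)"
    by (simp add: sigma_def fun_eq_iff)
  have "sigma differentiable (at (tau p))"
    unfolding sigma_eq using assms
    by (auto simp: Mset_iff_tau_nonzero intro!: derivative_intros)
  moreover have "tau differentiable (at p)"
    using bounded_linear_tau bounded_linear_imp_differentiable by blast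
  ultimately show ?thesis
    unfolding proj_def by (rule differentiable_chain_at[rotated])
qed

lemma frechet_derivative_proj_scaleR:
  assumes "p \<in> Mset" and "c > 0"
  shows "frechet_derivative proj (at p) w = frechet_derivative proj (at (c *\<^sub>R p)) (c *\<^sub>R w)"
proof -
  have "c *\<^sub>R p \<in> Mset"
    using assms by (simp add: Mset_iff_tau_nonzero)
  moreover have "((\<lambda>x. c *\<^sub>R x) has_derivative (\<lambda>x. c *\<^sub>R x)) (at p)"
    by (intro derivative_intros)
  ultimately show ?thesis
    using frechet_derivative_invariant[of "\<lambda>x. c *\<^sub>R x" "\<lambda>x. c *\<^sub>R x" p proj] assms(2)
    by (simp add: proj_differentiable proj_scaleR comp_def)
qed

lemma frechet_derivative_proj_add_diag:
  assumes "p \<in> Mset"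
  shows "frechet_derivative proj (at p) w = frechet_derivative proj (at (p + diag p0)) w"
proof -
  have "p + diag p0 \<in> Mset"
    using assms by (simp add: Mset_iff_tau_nonzero)
  moreover have "((\<lambda>x. x + diag p0) has_derivative id) (at p)"
    by (auto simp: id_def intro!: derivative_eq_intros)
  ultimately show ?thesis
    using frechet_derivative_invariant[of "\<lambda>x. x + diag p0" id p proj]
    by (simp add: proj_differentiable proj_add_diag comp_def)
qed

lemma homog_quadratic_field_scaleR:
  assumes "homog_quadratic_field X" and "p \<in> Mset" and "c *\<^sub>R p \<in> Mset"
  shows "X (c *\<^sub>R p) = c\<^sup>2 *\<^sub>R X p"
proof -
  obtain C where C: "\<And>p. p \<in> Mset \<Longrightarrow> X p = (\<chi> i a. \<Sum>j\<in>UNIV. \<Sum>b\<in>UNIV. \<Sum>k\<in>UNIV. \<Sum>d\<in>UNIV.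
                                   C i a j b k d * (p $ j $ b) * (p $ k $ d))"
    using assms(1) unfolding homog_quadratic_field_def by blast
  have scale_term: "\<And>K x y. K * (c * x) * (c * y) = c\<^sup>2 * (K * x * y)"
    by (simp add: power2_eq_square algebra_simps)
  show ?thesis
    unfolding C[OF assms(2)] C[OF assms(3)] vec_eq_iff
    by (simp add: scale_term sum_distrib_left)
qed

lemma Psi_scaleR_square: "c > 0 \<Longrightarrow> Psi (c\<^sup>2 *\<^sub>R v) = c *\<^sub>R Psi v"
  by (simp add: Psi_def real_sqrt_mult power2_eq_square)

lemma frechet_derivative_proj_Psi_sim_gen:
  assumes "homog_quadratic_field X"
    and "\<forall>p\<in>Mset. \<forall>p0. X (p + diag p0) = X p"
    and "sim_gen p q"
  shows "frechet_derivative proj (at p) (Psi (X p)) =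
         frechet_derivative proj (at q) (Psi (X q))"
proof -
  have p: "p \<in> Mset" and q: "q \<in> Mset"
    using assms(3) unfolding sim_gen_def by auto
  from assms(3) consider (scale) c where "c > 0" "q = c *\<^sub>R p" | (translate) p0 where "q = p + diag p0"
    unfolding sim_gen_def by blast
  then show ?thesis
  proof cases
    case scale
    then have "Psi (X q) = c *\<^sub>R Psi (X p)"
      using homog_quadratic_field_scaleR[OF assms(1) p] q by (simp add: Psi_scaleR_square)
    with scale p show ?thesis
      by (simp add: frechet_derivative_proj_scaleR)
  next
    case translate
    with assms(2) p show ?thesis
      by (simp add: frechet_derivative_proj_add_diag)
  qed
qed

theorem lemma2:
  fixes X :: "real^3^('n::{finite,linorder}) \<Rightarrow> real^3^('n::{finite,linorder})"
  assumes "CARD('n) \<ge> 2"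
    and "homog_quadratic_field X"
    and "\<forall>p\<in>Mset. \<forall>p0. X (p + diag p0) = X p"
    and "p \<in> Mset" and "p' \<in> Mset" and "sim p p'"
  shows "frechet_derivative proj (at p) (Psi (X p)) =
         frechet_derivative proj (at p') (Psi (X p'))"
  using frechet_derivative_proj_Psi_sim_gen[OF assms(2,3)] assms(6)
  unfolding sim_def by (rule equivclp_invariant)

end
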